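(* Consider the multi-block primal semidefinite program $\min_{\mathbf{X}\in\mathbb{X}}\{f(\mathbf{X}):=\langle\mathbf{C},\mathbf{X}\rangle \mid \mathcal{A}(\mathbf{X})=\mathbf{b},\ \mathbf{X}\in\mathcal{K}\}$ with optimal value $f^\star$, and suppose it satisfies Slater's condition. Let $\{(\mathbf{X}^k,\mathbf{y}^k,\mathbf{S}^k)\}$ be generated by the STRIDE algorithm described in the context. Then $\{f(\mathbf{X}^k)\}$ converges to $f^\star$.
   Context: $\mathbb{X}=\mathbb{S}^{n_1}\times\cdots\times\mathbb{S}^{n_l}$ (tuples of real symmetric matrices), $\langle\mathbf{C},\mathbf{X}\rangle=\sum_i\langle\mathbf{C}_i,\mathbf{X}_i\rangle$ (trace inner product), $\mathcal{A}:\mathbb{X}\to\mathbb{R}^m$ linear, $\mathcal{K}=\mathbb{S}^{n_1}_+\times\cdots\times\mathbb{S}^{n_l}_+$, and $\mathcal{F}_P=\{\mathbf{X}\in\mathbb{X}\mid\mathcal{A}(\mathbf{X})=\mathbf{b},\ \mathbf{X}\in\mathcal{K}\}$. STRIDE: given an initial point $(\mathbf{X}^0,\mathbf{S}^0,\mathbf{y}^0)\in\mathcal{K}\times\mathcal{K}\times\mathbb{R}^m$, a constant $\epsilon>0$, and a nondecreasing sequence $\sigma_k>0$, for $k=0,1,\dots$: (1) short projected-gradient step: $\overline{\mathbf{X}}^{k+1}=\Pi_{\mathcal{F}_P}(\mathbf{X}^k-\sigma_k\mathbf{C})$, where $\Pi_{\mathcal{F}_P}$ is the Euclidean projection onto $\mathcal{F}_P$,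 also producing dual iterates $(\mathbf{S}^{k+1},\mathbf{y}^{k+1})$ of the projection problem; (2) long step: compute a candidate $\widehat{\mathbf{X}}^{k+1}\in\mathbb{X}$ (in the paper, by rounding leading eigenvectors of $\overline{\mathbf{X}}^{k+1}$ to feasible points of an underlying polynomial problem, running local nonlinear-programming search, and lifting the best local solution to a rank-one moment matrix with its localizing matrices); (3) update: $\mathbf{X}^{k+1}=\widehat{\mathbf{X}}^{k+1}$ if $f(\widehat{\mathbf{X}}^{k+1})\le f(\overline{\mathbf{X}}^{k+1})-\epsilon$ and $\widehat{\mathbf{X}}^{k+1}\in\mathcal{F}_P$, otherwise $\mathbf{X}^{k+1}=\overline{\mathbf{X}}^{k+1}$. (The iteration is stopped when KKT residuals fall below a tolerance; convergence refers to the sequence generated.) *)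

theory Defs
  imports "HOL-Analysis.Analysis"
begin

text \<open>
  An element of the space X = S^{n_0} x ... x S^{n_{l-1}} is represented as a function
  X :: nat => nat => nat => real, where X i a b is the (a,b) entry of block i
  (i < l, a,b < n i).
\<close>

type_synonym blockmat = "nat \<Rightarrow> nat \<Rightarrow> nat \<Rightarrow> real"

definition in_space :: "nat \<Rightarrow> (nat \<Rightarrow> nat) \<Rightarrow> blockmat \<Rightarrow> bool" where
  "in_space l n X \<longleftrightarrow>
     (\<forall>i a b. X i a b = X i b a) \<and>
     (\<forall>i a b. \<not> (i < l \<and> a < n i \<and> b < n i) \<longrightarrow> X i a b = 0)"

definition inner_blk :: "nat \<Rightarrow> (nat \<Rightarrow> nat) \<Rightarrow> blockmat \<Rightarrow> blockmat \<Rightarrow> real" where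
  "inner_blk l n C X = (\<Sum>i<l. \<Sum>a<n i. \<Sum>b<n i. C i a b * X i a b)"

definition in_cone :: "nat \<Rightarrow> (nat \<Rightarrow> nat) \<Rightarrow> blockmat \<Rightarrow> bool" where
  "in_cone l n X \<longleftrightarrow> in_space l n X \<and>
     (\<forall>i<l. \<forall>v :: nat \<Rightarrow> real. (\<Sum>a<n i. \<Sum>b<n i. v a * X i a b * v b) \<ge> 0)"

definition in_int_cone :: "nat \<Rightarrow> (nat \<Rightarrow> nat) \<Rightarrow> blockmat \<Rightarrow> bool" where
  "in_int_cone l n X \<longleftrightarrow> in_space l n X \<and>
     (\<forall>i<l. \<forall>v :: nat \<Rightarrow> real. (\<exists>a<n i. v a \<noteq> 0) \<longrightarrow>
        (\<Sum>a<n i. \<Sum>b<n i. v a * X i a b * v b) > 0)"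

definition Aop :: "nat \<Rightarrow> (nat \<Rightarrow> nat) \<Rightarrow> nat \<Rightarrow> (nat \<Rightarrow> blockmat) \<Rightarrow> blockmat \<Rightarrow> nat \<Rightarrow> real" where
  "Aop l n m A X = (\<lambda>j. if j < m then inner_blk l n (A j) X else 0)"

definition feas :: "nat \<Rightarrow> (nat \<Rightarrow> nat) \<Rightarrow> nat \<Rightarrow> (nat \<Rightarrow> blockmat) \<Rightarrow> (nat \<Rightarrow> real) \<Rightarrow> blockmat set" where
  "feas l n m A b = {X. in_cone l n X \<and> (\<forall>j<m. inner_blk l n (A j) X = b j)}"

definition slater :: "nat \<Rightarrow> (nat \<Rightarrow> nat) \<Rightarrow> nat \<Rightarrow> (nat \<Rightarrow> blockmat) \<Rightarrow> (nat \<Rightarrow> real) \<Rightarrow> bool" where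
  "slater l n m A b \<longleftrightarrow> (\<exists>X. in_int_cone l n X \<and> (\<forall>j<m. inner_blk l n (A j) X = b j))"

definition is_proj :: "nat \<Rightarrow> (nat \<Rightarrow> nat) \<Rightarrow> blockmat set \<Rightarrow> blockmat \<Rightarrow> blockmat \<Rightarrow> bool" where
  "is_proj l n F Y P \<longleftrightarrow> P \<in> F \<and>
     (\<forall>Z\<in>F. inner_blk l n (\<lambda>i a b. Y i a b - P i a b) (\<lambda>i a b. Y i a b - P i a b)
             \<le> inner_blk l n (\<lambda>i a b. Y i a b - Z i a b) (\<lambda>i a b. Y i a b - Z i a b))"

end

theory Submission
  imports Defs
begin

text \<open>
  Every short step is a projected gradient step, so for any feasible Z the three-point
  inequality 2 sigma(k) (f(Xbar(k+1)) - f(Z)) \<le> |X(k) - Z|^2 - |Xbar(k+1) - Z|^2 holds.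
  Taking Z = X(k) shows that the objective never increases along the iterates, and accepted
  long steps decrease it by at least \<epsilon>; as it is bounded below on the feasible set, it
  converges to some L and only finitely many long steps are accepted. If some feasible Z had
  f(Z) < L, then from then on every step would decrease |X(k) - Z|^2 by at least
  2 sigma(0) (L - f(Z)) > 0, which is impossible.
\<close>

lemma uniform_decrease_imp_negative:
  fixes D :: "nat \<Rightarrow> real"
  assumes decr: "\<And>j. D (Suc j) \<le> D j - \<delta>" and "\<delta> > 0"
  shows "\<exists>j. D j < 0"
proof -
  have D_le: "D j \<le> D 0 - real j * \<delta>" for j
  proof (induction j)
    case (Suc j)
    then show ?case using decr[of j] by (simp add: algebra_simps)
  qed simp
  obtain j :: nat where "D 0 < real j * \<delta>"
    using reals_Archimedean3[OF \<open>\<delta> > 0\<close>] by blast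
  with D_le[of j] show ?thesis by (intro exI[of _ j]) linarith
qed

text \<open>
  D plays the role of the squared distance; the three-point inequality is all that is used
  about the projected gradient step.
\<close>

locale stride_scheme =
  fixes F :: "'a set" and f :: "'a \<Rightarrow> real" and D :: "'a \<Rightarrow> 'a \<Rightarrow> real"
    and \<sigma> :: "nat \<Rightarrow> real" and \<epsilon> :: real and X Xbar :: "nat \<Rightarrow> 'a"
  assumes D_nonneg: "D U V \<ge> 0"
    and D_self: "D U U = 0"
    and f_bdd_below: "bdd_below (f ` F)"
    and eps_pos: "\<epsilon> > 0"
    and sigma_pos: "\<sigma> k > 0"
    and sigma_mono: "mono \<sigma>"
    and Xbar_mem: "Xbar (Suc k) \<in> F"
    and three_point: "Z \<in> F \<Longrightarrow>
          2 * \<sigma> k * (f (Xbar (Suc k)) - f Z) \<le> D (X k) Z - D (Xbar (Suc k)) Z"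
    and update: "X (Suc k) = Xbar (Suc k) \<or>
          X (Suc k) \<in> F \<and> f (X (Suc k)) \<le> f (Xbar (Suc k)) - \<epsilon>"
begin

lemma X_mem: "X (Suc k) \<in> F"
  using update[of k] Xbar_mem[of k] by auto

lemma f_X_le_Xbar: "f (X (Suc k)) \<le> f (Xbar (Suc k))"
  using update[of k] eps_pos by auto

lemma f_Xbar_le_X: "f (Xbar (Suc (Suc k))) \<le> f (X (Suc k))"
proof -
  have "D (X (Suc k)) (X (Suc k)) - D (Xbar (Suc (Suc k))) (X (Suc k)) \<le> 0"
    using D_self D_nonneg by simp
  with three_point[OF X_mem, of "Suc k"]
  have "2 * \<sigma> (Suc k) * (f (Xbar (Suc (Suc k))) - f (X (Suc k))) \<le> 0"
    by (rule order_trans)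
  with sigma_pos[of "Suc k"] show ?thesis
    by (simp add: mult_le_0_iff)
qed

lemma decseq_objective: "decseq (\<lambda>k. f (X (Suc k)))"
  unfolding decseq_Suc_iff using f_Xbar_le_X f_X_le_Xbar order_trans by blast

lemma objective_ge_Inf: "Z \<in> F \<Longrightarrow> (INF W\<in>F. f W) \<le> f Z"
  using f_bdd_below by (rule cINF_lower)

lemma eventually_short_step:
  assumes "convergent (\<lambda>k. f (X (Suc k)))"
  shows "\<forall>\<^sub>F k in sequentially. X (Suc (Suc k)) = Xbar (Suc (Suc k))"
proof -
  have "Cauchy (\<lambda>k. f (X (Suc k)))"
    using assms by (rule convergent_Cauchy)
  then obtain K where K: "\<forall>k\<ge>K. dist (f (X (Suc (Suc k)))) (f (X (Suc k))) < \<epsilon>"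
    using eps_pos unfolding Cauchy_def by (meson le_Suc_eq)
  have "X (Suc (Suc k)) = Xbar (Suc (Suc k))" if "k \<ge> K" for k
    using update[of "Suc k"] f_Xbar_le_X[of k] K that by (auto simp: dist_real_def)
  then show ?thesis
    unfolding eventually_sequentially by blast
qed

lemma limit_le_objective:
  assumes lim: "(\<lambda>k. f (X (Suc k))) \<longlonglongrightarrow> L" and Z: "Z \<in> F"
  shows "L \<le> f Z"
proof (rule ccontr)
  assume "\<not> L \<le> f Z"
  then have gap: "L - f Z > 0" by simp
  have L_le: "L \<le> f (X (Suc k))" for k
    using decseq_objective lim by (rule decseq_ge)
  obtain K where K: "\<And>k. k \<ge> K \<Longrightarrow> X (Suc (Suc k)) = Xbar (Suc (Suc k))"
    using eventually_short_step[OF convergentI[OF lim]]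
    unfolding eventually_sequentially by blast
  define \<delta> where "\<delta> = 2 * \<sigma> 0 * (L - f Z)"
  have "D (X (Suc (Suc (K + j)))) Z \<le> D (X (Suc (K + j))) Z - \<delta>" for j
  proof -
    have "2 * \<sigma> (Suc (K + j)) * (f (X (Suc (Suc (K + j)))) - f Z)
        \<le> D (X (Suc (K + j))) Z - D (X (Suc (Suc (K + j)))) Z"
      using three_point[OF Z, of "Suc (K + j)"] K[of "K + j"] by simp
    moreover have "\<sigma> 0 * (L - f Z) \<le> \<sigma> (Suc (K + j)) * (f (X (Suc (Suc (K + j)))) - f Z)"
    proof (rule mult_mono)
      show "\<sigma> 0 \<le> \<sigma> (Suc (K + j))"
        using sigma_mono by (simp add: mono_def)
      show "0 \<le> \<sigma> (Suc (K + j))"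
        using sigma_pos less_imp_le by blast
    qed (use gap L_le[of "Suc (K + j)"] in auto)
    ultimately show ?thesis
      unfolding \<delta>_def by linarith
  qed
  moreover have "\<delta> > 0"
    using gap sigma_pos[of 0] unfolding \<delta>_def by simp
  ultimately obtain j where "D (X (Suc (K + j))) Z < 0"
    using uniform_decrease_imp_negative[of "\<lambda>j. D (X (Suc (K + j))) Z"] by auto
  with D_nonneg show False
    by (metis not_less)
qed

theorem objective_tendsto_Inf: "(\<lambda>k. f (X k)) \<longlonglongrightarrow> (INF Z\<in>F. f Z)"
proof -
  have lower: "\<forall>k. (INF Z\<in>F. f Z) \<le> f (X (Suc k))"
    using objective_ge_Inf X_mem by blast
  obtain L where lim: "(\<lambda>k. f (X (Suc k))) \<longlonglongrightarrow> L"
    using decseq_convergent[OF decseq_objective lower] by blast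
  have "L \<le> (INF Z\<in>F. f Z)"
    using X_mem limit_le_objective[OF lim] by (intro cINF_greatest) auto
  moreover have "(INF Z\<in>F. f Z) \<le> L"
    using lim lower by (intro LIMSEQ_le_const) auto
  ultimately have "L = (INF Z\<in>F. f Z)"
    by (rule antisym)
  with lim show ?thesis
    by (auto intro: LIMSEQ_imp_Suc)
qed

end

definition blk_sum :: "nat \<Rightarrow> (nat \<Rightarrow> nat) \<Rightarrow> blockmat \<Rightarrow> real" where
  "blk_sum l n g = (\<Sum>i<l. \<Sum>a<n i. \<Sum>b<n i. g i a b)"

lemma inner_blk_eq_blk_sum: "inner_blk l n U V = blk_sum l n (\<lambda>i a b. U i a b * V i a b)"
  by (simp add: inner_blk_def blk_sum_def)

lemma blk_sum_add: "blk_sum l n g + blk_sum l n h = blk_sum l n (\<lambda>i a b. g i a b + h i a b)"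
  by (simp add: blk_sum_def sum.distrib)

lemma blk_sum_diff: "blk_sum l n g - blk_sum l n h = blk_sum l n (\<lambda>i a b. g i a b - h i a b)"
  by (simp add: blk_sum_def sum_subtractf)

lemma blk_sum_scale: "c * blk_sum l n g = blk_sum l n (\<lambda>i a b. c * g i a b)"
  by (simp add: blk_sum_def sum_distrib_left)

lemmas blk_sum_linear = inner_blk_eq_blk_sum blk_sum_add blk_sum_diff blk_sum_scale

lemma blk_sum_cong:
  "(\<And>i a b. i < l \<Longrightarrow> a < n i \<Longrightarrow> b < n i \<Longrightarrow> g i a b = h i a b) \<Longrightarrow>
    blk_sum l n g = blk_sum l n h"
  unfolding blk_sum_def by (intro sum.cong refl) auto

definition sqdist_blk :: "nat \<Rightarrow> (nat \<Rightarrow> nat) \<Rightarrow> blockmat \<Rightarrow> blockmat \<Rightarrow> real" where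
  "sqdist_blk l n U V = inner_blk l n (\<lambda>i a b. U i a b - V i a b) (\<lambda>i a b. U i a b - V i a b)"

lemma sqdist_blk_nonneg: "sqdist_blk l n U V \<ge> 0"
  unfolding sqdist_blk_def inner_blk_def by (intro sum_nonneg) simp

lemma sqdist_blk_self: "sqdist_blk l n U U = 0"
  by (simp add: sqdist_blk_def inner_blk_def)

lemma is_proj_iff_sqdist:
  "is_proj l n F Y P \<longleftrightarrow> P \<in> F \<and> (\<forall>Z\<in>F. sqdist_blk l n Y P \<le> sqdist_blk l n Y Z)"
  by (simp add: is_proj_def sqdist_blk_def)

definition convex_blk :: "blockmat set \<Rightarrow> bool" where
  "convex_blk F \<longleftrightarrow> (\<forall>Z\<in>F. \<forall>P\<in>F. \<forall>t::real. 0 \<le> t \<and> t \<le> 1 \<longrightarrow>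
     (\<lambda>i a b. P i a b + t * (Z i a b - P i a b)) \<in> F)"

lemma quad_form_segment:
  fixes t :: real
  shows "(\<Sum>a<N. \<Sum>c<N. v a * (P a c + t * (Z a c - P a c)) * v c)
    = (1 - t) * (\<Sum>a<N. \<Sum>c<N. v a * P a c * v c) + t * (\<Sum>a<N. \<Sum>c<N. v a * Z a c * v c)"
  by (simp add: sum_distrib_left sum.distrib[symmetric] algebra_simps)

lemma convex_blk_feas: "convex_blk (feas l n m A b)"
  unfolding convex_blk_def
proof (intro ballI allI impI)
  fix Z P and t :: real
  assume Z: "Z \<in> feas l n m A b" and P: "P \<in> feas l n m A b" and t: "0 \<le> t \<and> t \<le> 1"
  let ?W = "\<lambda>i a b. P i a b + t * (Z i a b - P i a b)"
  have "in_cone l n ?W"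
    unfolding in_cone_def
  proof (intro conjI allI impI)
    show "in_space l n ?W"
      using Z P by (simp add: feas_def in_cone_def in_space_def)
    fix i v assume "i < l"
    then have "(\<Sum>a<n i. \<Sum>c<n i. v a * P i a c * v c) \<ge> 0"
      "(\<Sum>a<n i. \<Sum>c<n i. v a * Z i a c * v c) \<ge> 0"
      using Z P by (auto simp: feas_def in_cone_def)
    then show "0 \<le> (\<Sum>a<n i. \<Sum>c<n i. v a * ?W i a c * v c)"
      unfolding quad_form_segment using t by simp
  qed
  moreover have "inner_blk l n (A j) ?W = b j" if "j < m" for j
  proof -
    have "inner_blk l n (A j) ?W
        = inner_blk l n (A j) P + t * (inner_blk l n (A j) Z - inner_blk l n (A j) P)"
      unfolding blk_sum_linear by (rule blk_sum_cong) (simp add: algebra_simps)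
    then show ?thesis
      using Z P that by (simp add: feas_def)
  qed
  ultimately show "?W \<in> feas l n m A b"
    by (simp add: feas_def)
qed

lemma nonpos_of_le_quadratic_near_zero:
  fixes c q :: real
  assumes "q \<ge> 0" and bound: "\<And>t. 0 < t \<Longrightarrow> t \<le> 1 \<Longrightarrow> 2 * t * c \<le> t * t * q"
  shows "c \<le> 0"
proof (rule ccontr)
  assume "\<not> c \<le> 0"
  define t where "t = min 1 (c / (q + 1))"
  have "0 < t" "t \<le> 1"
    using \<open>\<not> c \<le> 0\<close> \<open>q \<ge> 0\<close> by (auto simp: t_def)
  then have "2 * c \<le> t * q"
    using bound[of t] by (simp add: mult.assoc)
  moreover have "t * q < c"
  proof -
    have "t * q \<le> c / (q + 1) * q"
      using \<open>q \<ge> 0\<close> by (intro mult_right_mono) (auto simp: t_def)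
    also have "\<dots> < c"
      using \<open>\<not> c \<le> 0\<close> \<open>q \<ge> 0\<close> by (simp add: field_simps)
    finally show ?thesis .
  qed
  ultimately show False
    using \<open>\<not> c \<le> 0\<close> by simp
qed

lemma is_proj_variational_ineq:
  assumes proj: "is_proj l n F Y P" and "convex_blk F" and "Z \<in> F"
  shows "inner_blk l n (\<lambda>i a b. Y i a b - P i a b) (\<lambda>i a b. Z i a b - P i a b) \<le> 0"
proof (rule nonpos_of_le_quadratic_near_zero)
  show "sqdist_blk l n Z P \<ge> 0"
    by (rule sqdist_blk_nonneg)
  fix t :: real
  assume "0 < t" "t \<le> 1"
  let ?W = "\<lambda>i a b. P i a b + t * (Z i a b - P i a b)"
  have "?W \<in> F"
    using assms \<open>0 < t\<close> \<open>t \<le> 1\<close> unfolding convex_blk_def is_proj_iff_sqdist by auto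
  then have "sqdist_blk l n Y P \<le> sqdist_blk l n Y ?W"
    using proj by (simp add: is_proj_iff_sqdist)
  moreover have "sqdist_blk l n Y ?W = sqdist_blk l n Y P
      - 2 * t * inner_blk l n (\<lambda>i a b. Y i a b - P i a b) (\<lambda>i a b. Z i a b - P i a b)
      + t * t * sqdist_blk l n Z P"
    unfolding sqdist_blk_def blk_sum_linear by (rule blk_sum_cong) (simp add: algebra_simps)
  ultimately show "2 * t * inner_blk l n (\<lambda>i a b. Y i a b - P i a b) (\<lambda>i a b. Z i a b - P i a b)
      \<le> t * t * sqdist_blk l n Z P"
    by linarith
qed

lemma is_proj_three_point:
  assumes proj: "is_proj l n F (\<lambda>i a c. U i a c - s * C i a c) P" and "convex_blk F" and "Z \<in> F"
  shows "2 * s * (inner_blk l n C P - inner_blk l n C Z)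
    \<le> sqdist_blk l n U Z - sqdist_blk l n P Z"
proof -
  have "inner_blk l n (\<lambda>i a b. U i a b - s * C i a b - P i a b) (\<lambda>i a b. Z i a b - P i a b) \<le> 0"
    using is_proj_variational_ineq[OF assms] by simp
  moreover have "sqdist_blk l n U Z - sqdist_blk l n P Z - 2 * s * (inner_blk l n C P - inner_blk l n C Z)
    = sqdist_blk l n U P
      - 2 * inner_blk l n (\<lambda>i a b. U i a b - s * C i a b - P i a b) (\<lambda>i a b. Z i a b - P i a b)"
    unfolding sqdist_blk_def blk_sum_linear by (rule blk_sum_cong) (simp add: algebra_simps)
  ultimately show ?thesis
    using sqdist_blk_nonneg[of l n U P] by linarith
qed

theorem theorem3:
  fixes l :: nat and n :: "nat \<Rightarrow> nat" and m :: nat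
    and C :: blockmat and A :: "nat \<Rightarrow> blockmat" and b :: "nat \<Rightarrow> real"
    and fstar :: real and \<epsilon> :: real and \<sigma> :: "nat \<Rightarrow> real"
    and X Xbar Xhat :: "nat \<Rightarrow> blockmat"
  assumes C_sp: "in_space l n C"
    and A_sp: "\<forall>j<m. in_space l n (A j)"
    and slater: "slater l n m A b"
    and bdd: "bdd_below ((\<lambda>Z. inner_blk l n C Z) ` feas l n m A b)"
    and fstar: "fstar = (INF Z\<in>feas l n m A b. inner_blk l n C Z)"
    and eps: "\<epsilon> > 0"
    and sigma_pos: "\<forall>k. \<sigma> k > 0"
    and sigma_mono: "mono \<sigma>"
    and X0: "in_cone l n (X 0)"
    and short_step: "\<forall>k. is_proj l n (feas l n m A b)
                          (\<lambda>i a c. X k i a c - \<sigma> k * C i a c) (Xbar (Suc k))"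
    and long_step: "\<forall>k. in_space l n (Xhat (Suc k))"
    and update: "\<forall>k. X (Suc k) =
        (if inner_blk l n C (Xhat (Suc k)) \<le> inner_blk l n C (Xbar (Suc k)) - \<epsilon>
            \<and> Xhat (Suc k) \<in> feas l n m A b
         then Xhat (Suc k) else Xbar (Suc k))"
  shows "(\<lambda>k. inner_blk l n C (X k)) \<longlonglongrightarrow> fstar"
proof -
  interpret stride_scheme "feas l n m A b" "inner_blk l n C" "sqdist_blk l n" \<sigma> \<epsilon> X Xbar
  proof
    show "Xbar (Suc k) \<in> feas l n m A b" for k
      using short_step by (simp add: is_proj_def)
    show "2 * \<sigma> k * (inner_blk l n C (Xbar (Suc k)) - inner_blk l n C Z)
        \<le> sqdist_blk l n (X k) Z - sqdist_blk l n (Xbar (Suc k)) Z" if "Z \<in> feas l n m A b" for k Z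
      using is_proj_three_point[OF short_step[rule_format] convex_blk_feas that] .
    show "X (Suc k) = Xbar (Suc k) \<or> X (Suc k) \<in> feas l n m A b
        \<and> inner_blk l n C (X (Suc k)) \<le> inner_blk l n C (Xbar (Suc k)) - \<epsilon>" for k
      using update by simp
  qed (use sqdist_blk_nonneg sqdist_blk_self bdd eps sigma_pos sigma_mono in auto)
  show ?thesis
    using objective_tendsto_Inf fstar by simp
qed

end
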